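(* Let $\bigwedge_{\ast}$ be a complex Grassmann algebra (generated by finitely or countably many odd generators $\zeta_1,\zeta_2,\dots$), with even part $\bigwedge_{\ast}^{0}$ and odd part $\bigwedge_{\ast}^{1}$. Let $z$ be an even formal variable and $\theta$ an odd formal variable (so $\theta^2=0$ and $\theta$ anticommutes with $\bigwedge_{\ast}^{1}$). For $j\in\mathbb{Z}$ consider the vector fields $$\mathcal{L}^{(1)}_{j}=-z^{j+1}\frac{\partial}{\partial z}-\left(\frac{j+1}{2}\right)\theta z^{j}\frac{\partial}{\partial\theta},\qquad \mathcal{G}_{j+\frac{1}{2}}=-z^{j+1}\left(\frac{\partial}{\partial\theta}-\theta\frac{\partial}{\partial z}\right),$$ where $\partial/\partial\theta$ is the (odd) left derivative. Let $A_{j}\in\bigwedge_{\ast}^{0}$ and $M_{j+\frac{1}{2}}\in\bigwedge_{\ast}^{1}$ for $j\in\mathbb{Z}_{<0}$ be arbitrary sequences, and define the operator $$E_{A,M}=\exp\left(-\sum_{j\in\mathbb{Z}_{<0}}\left(A_{j}\mathcal{L}^{(1)}_{j}+M_{j+\frac{1}{2}}\mathcal{G}_{j+\frac{1}{2}}\right)\right)$$ acting on $(\bigwedge_{\ast}z[[z^{-1}]][\theta])^{0}\oplus(\bigwedge_{\ast}z[[z^{-1}]][\theta])^{1}$. Set $(\tilde z,\tilde\theta)=E_{A,M}\cdot(z,\theta)$, where $E_{A,M}$ acts on each component separately. Then, with $D=\frac{\partial}{\partial\theta}+\theta\frac{\partial}{\partial z}$, one has $$D\tilde z=\tilde\theta\,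 D\tilde\theta,$$ i.e. $(\tilde z,\tilde\theta)$ is a formal $\mathcal{N}=1$ superconformal map.
   Context: A pair $(\tilde z,\tilde\theta)$ of an even and an odd formal superfunction of $(z,\theta)$ is called ($\mathcal{N}=1$) superconformal if the odd derivative $D=\partial_\theta+\theta\partial_z$ transforms homogeneously of degree one, which is equivalent to $D\tilde z=\tilde\theta D\tilde\theta$. The superscripts $0,1$ denote the even and odd parts of the $\mathbb{Z}_2$-graded algebra $\bigwedge_{\ast}z[[z^{-1}]][\theta]$ (grading from the Grassmann algebra together with $\theta$ odd, $z$ even). *)

theory Defs
  imports Complex_Main "HOL-Library.Function_Algebras"
begin

text \<open>An element is represented by its coefficient function on monomials:
  a finite set S = {s1 < ... < sk} of generator indices stands for the
  monomial zeta_s1 ... zeta_sk.\<close>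

type_synonym gr = "nat set \<Rightarrow> complex"

definition grass :: "gr \<Rightarrow> bool" where
  "grass a \<longleftrightarrow> finite {S. a S \<noteq> 0} \<and> (\<forall>S. a S \<noteq> 0 \<longrightarrow> finite S)"

definition geven :: "gr \<Rightarrow> bool" where
  "geven a \<longleftrightarrow> (\<forall>S. a S \<noteq> 0 \<longrightarrow> even (card S))"

definition godd :: "gr \<Rightarrow> bool" where
  "godd a \<longleftrightarrow> (\<forall>S. a S \<noteq> 0 \<longrightarrow> odd (card S))"

text \<open>Sign of reordering zeta_T zeta_U (T, U disjoint) into increasing order.\<close>
definition gsign :: "nat set \<Rightarrow> nat set \<Rightarrow> complex" where
  "gsign T U = (-1) ^ card {(t, u). t \<in> T \<and> u \<in> U \<and> u < t}"

definition gmul :: "gr \<Rightarrow> gr \<Rightarrow> gr" where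
  "gmul a b = (\<lambda>S. if finite S then (\<Sum>T\<in>Pow S. gsign T (S - T) * a T * b (S - T)) else 0)"

definition gone :: gr where
  "gone = (\<lambda>S. if S = {} then 1 else 0)"

definition gscale :: "complex \<Rightarrow> gr \<Rightarrow> gr" where
  "gscale c a = (\<lambda>S. c * a S)"

definition ghat :: "gr \<Rightarrow> gr" where
  "ghat a = (\<lambda>S. (-1) ^ card S * a S)"

type_synonym lser = "int \<Rightarrow> gr"            \<comment> \<open>coefficient of z^n\<close>
type_synonym sser = "lser \<times> lser"          \<comment> \<open>(f0, f1) = f0(z) + theta f1(z)\<close>

text \<open>Product of Grassmann-valued Laurent series (finite sum for series bounded above in degree).\<close>
definition lmul :: "lser \<Rightarrow> lser \<Rightarrow> lser" where
  "lmul f g = (\<lambda>n. \<Sum>k\<in>{k. f k \<noteq> 0 \<and> g (n - k) \<noteq> 0}. gmul (f k) (g (n - k)))"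

text \<open>(a0 + theta a1)(b0 + theta b1) = a0 b0 + theta (hat(a0) b1 + a1 b0).\<close>
definition smul :: "sser \<Rightarrow> sser \<Rightarrow> sser" where
  "smul f g = (lmul (fst f) (fst g),
               \<lambda>n. lmul (\<lambda>k. ghat (fst f k)) (snd g) n + lmul (snd f) (fst g) n)"

definition cmul :: "gr \<Rightarrow> sser \<Rightarrow> sser" where
  "cmul c f = (\<lambda>n. gmul c (fst f n), \<lambda>n. gmul (ghat c) (snd f n))"

definition dz :: "lser \<Rightarrow> lser" where
  "dz f = (\<lambda>n. gscale (of_int (n + 1)) (f (n + 1)))"

definition sh :: "int \<Rightarrow> lser \<Rightarrow> lser" where
  "sh m g = (\<lambda>n. g (n - m))"

text \<open>D = d/dtheta + theta d/dz (left derivative): D(f0 + theta f1) = f1 + theta f0'.\<close>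
definition sD :: "sser \<Rightarrow> sser" where
  "sD f = (snd f, dz (fst f))"

text \<open>L_j = - z^(j+1) d/dz - ((j+1)/2) theta z^j d/dtheta.\<close>
definition Lop :: "int \<Rightarrow> sser \<Rightarrow> sser" where
  "Lop j f = (\<lambda>n. - sh (j + 1) (dz (fst f)) n,
              \<lambda>n. - sh (j + 1) (dz (snd f)) n - gscale ((of_int j + 1) / 2) (sh j (snd f) n))"

text \<open>G_(j+1/2) = - z^(j+1) (d/dtheta - theta d/dz).\<close>
definition Gop :: "int \<Rightarrow> sser \<Rightarrow> sser" where
  "Gop j f = (\<lambda>n. - sh (j + 1) (snd f) n, \<lambda>n. sh (j + 1) (dz (fst f)) n)"

definition Yterm :: "(int \<Rightarrow> gr) \<Rightarrow> (int \<Rightarrow> gr) \<Rightarrow> int \<Rightarrow> sser \<Rightarrow> sser" where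
  "Yterm A M j f =
     (\<lambda>n. - fst (cmul (A j) (Lop j f)) n - fst (cmul (M j) (Gop j f)) n,
      \<lambda>n. - snd (cmul (A j) (Lop j f)) n - snd (cmul (M j) (Gop j f)) n)"

text \<open>Sum over j < 0, taken coefficientwise (only finitely many nonzero terms
  for series bounded above in degree).\<close>
definition negsum :: "(int \<Rightarrow> gr) \<Rightarrow> gr" where
  "negsum F = (\<Sum>j\<in>{j. j < 0 \<and> F j \<noteq> 0}. F j)"

definition Yop :: "(int \<Rightarrow> gr) \<Rightarrow> (int \<Rightarrow> gr) \<Rightarrow> sser \<Rightarrow> sser" where
  "Yop A M f = (\<lambda>n. negsum (\<lambda>j. fst (Yterm A M j f) n),
                \<lambda>n. negsum (\<lambda>j. snd (Yterm A M j f) n))"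

text \<open>E_{A,M} = exp(Yop A M), the exponential series taken coefficientwise
  (each coefficient receives finitely many nonzero contributions).\<close>
definition Eop :: "(int \<Rightarrow> gr) \<Rightarrow> (int \<Rightarrow> gr) \<Rightarrow> sser \<Rightarrow> sser" where
  "Eop A M f =
     (\<lambda>n. \<Sum>k\<in>{k. fst ((Yop A M ^^ k) f) n \<noteq> 0}. gscale (inverse (fact k)) (fst ((Yop A M ^^ k) f) n),
      \<lambda>n. \<Sum>k\<in>{k. snd ((Yop A M ^^ k) f) n \<noteq> 0}. gscale (inverse (fact k)) (snd ((Yop A M ^^ k) f) n))"

definition zser :: sser where
  "zser = (\<lambda>n. if n = 1 then gone else 0, \<lambda>n. 0)"

definition thser :: sser where
  "thser = (\<lambda>n. 0, \<lambda>n. if n = 0 then gone else 0)"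

end

theory Submission
  imports Defs "HOL-Computational_Algebra.Formal_Laurent_Series" "HOL-Library.Product_Plus"
begin

text \<open>
  The exponent is the vector field Y = p d/dz + m (d/d\<theta> - \<theta> d/dz) + q \<theta> d/d\<theta>, where
  p = sum A_j z^(j+1) and q = p'/2 are even and m = sum M_(j+1/2) z^(j+1) is odd. Hence Y is
  an even derivation of the algebra of superfunctions, and D Y = Y D + h D with the even
  superfunction h = q + \<theta> m'. Since D z = \<theta> and D \<theta> = 1, induction on k gives
  D (Y^k z) = sum_i (k choose i) Y^i \<theta> * D (Y^(k-i) \<theta>), and dividing by k! and summing
  over k is the Cauchy product D (e^Y z) = e^Y \<theta> * D (e^Y \<theta>). If z has weight 2 and \<theta>
  weight 1, then Y lowers the weight by at least one, so each coefficient of these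
  exponentials is a finite sum.
\<close>

notation fls_nth (infixl \<open>$$\<close> 75)

section \<open>The Grassmann product\<close>

definition inversions :: "nat set \<Rightarrow> nat set \<Rightarrow> nat" where
  "inversions T U = card {(t, u). t \<in> T \<and> u \<in> U \<and> u < t}"

lemma gsign_eq_inversions: "gsign T U = (-1) ^ inversions T U"
  by (simp add: gsign_def inversions_def)

lemma finite_inversion_pairs:
  "finite T \<Longrightarrow> finite U \<Longrightarrow> finite {(t, u). t \<in> T \<and> u \<in> U \<and> u < t}"
  by (rule finite_subset[of _ "T \<times> U"]) auto

lemma inversions_Un_right:
  assumes "finite T" "finite U" "finite V" "U \<inter> V = {}"
  shows "inversions T (U \<union> V) = inversions T U + inversions T V"
proof -
  have "{(t, u). t \<in> T \<and> u \<in> U \<union> V \<and> u < t} =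
        {(t, u). t \<in> T \<and> u \<in> U \<and> u < t} \<union> {(t, u). t \<in> T \<and> u \<in> V \<and> u < t}"
    by auto
  then show ?thesis
    unfolding inversions_def
    by (simp, intro card_Un_disjoint) (use assms finite_inversion_pairs in auto)
qed

lemma inversions_Un_left:
  assumes "finite T" "finite U" "finite V" "T \<inter> U = {}"
  shows "inversions (T \<union> U) V = inversions T V + inversions U V"
proof -
  have "{(t, u). t \<in> T \<union> U \<and> u \<in> V \<and> u < t} =
        {(t, u). t \<in> T \<and> u \<in> V \<and> u < t} \<union> {(t, u). t \<in> U \<and> u \<in> V \<and> u < t}"
    by auto
  then show ?thesis
    unfolding inversions_def
    by (simp, intro card_Un_disjoint) (use assms finite_inversion_pairs in auto)
qed

lemma inversions_swap:
  assumes "finite T" "finite U" "T \<inter> U = {}"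
  shows "inversions T U + inversions U T = card T * card U"
proof -
  let ?A = "{(t, u). t \<in> T \<and> u \<in> U \<and> u < t}"
  let ?B = "{(t, u). t \<in> T \<and> u \<in> U \<and> t < u}"
  have "{(u, t). u \<in> U \<and> t \<in> T \<and> t < u} = prod.swap ` ?B"
    by (auto simp: image_iff)
  then have "inversions U T = card ?B"
    unfolding inversions_def by (simp add: card_image)
  moreover have "T \<times> U = ?A \<union> ?B"
    using assms(3) by (auto simp: linorder_neq_iff)
  moreover have "card (?A \<union> ?B) = card ?A + card ?B"
    by (rule card_Un_disjoint) (use assms in \<open>auto intro: finite_subset[of _ "T \<times> U"]\<close>)
  ultimately show ?thesis
    unfolding inversions_def by (metis card_cartesian_product)
qed

lemma gsign_assoc:
  assumes "finite T" "finite V" "finite W" "T \<inter> V = {}" "T \<inter> W = {}" "V \<inter> W = {}"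
  shows "gsign (T \<union> V) W * gsign T V = gsign T (V \<union> W) * gsign V W"
  using assms
  by (simp add: gsign_eq_inversions inversions_Un_left inversions_Un_right power_add[symmetric] add_ac)

lemma gsign_square: "gsign T U * gsign T U = 1"
  by (simp add: gsign_def power_mult_distrib[symmetric])

lemma gsign_swap:
  assumes "finite T" "finite U" "T \<inter> U = {}"
  shows "gsign T U = (-1) ^ (card T * card U) * gsign U T"
proof -
  have "gsign T U * gsign U T = (-1) ^ (card T * card U)"
    using inversions_swap[OF assms] by (simp add: gsign_eq_inversions power_add[symmetric])
  then have "gsign T U * gsign U T * gsign U T = (-1) ^ (card T * card U) * gsign U T"
    by simp
  then show ?thesis
    by (simp add: mult.assoc gsign_square)
qed

lemma gsign_empty_left [simp]: "gsign {} U = 1"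
  by (simp add: gsign_def)

lemma gsign_empty_right [simp]: "gsign T {} = 1"
  by (simp add: gsign_def)

lemma gmul_finite: "finite S \<Longrightarrow> gmul a b S = (\<Sum>T\<in>Pow S. gsign T (S - T) * a T * b (S - T))"
  by (simp add: gmul_def)

lemma gmul_gmul_left_finite:
  assumes "finite S"
  shows "gmul (gmul a b) c S = (\<Sum>(U, T)\<in>Sigma (Pow S) Pow.
           gsign U (S - U) * gsign T (U - T) * a T * b (U - T) * c (S - U))"
proof -
  have "gmul (gmul a b) c S = (\<Sum>U\<in>Pow S. \<Sum>T\<in>Pow U.
          gsign U (S - U) * gsign T (U - T) * a T * b (U - T) * c (S - U))"
    unfolding gmul_finite[OF assms]
  proof (rule sum.cong[OF refl])
    fix U assume "U \<in> Pow S"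
    then have "finite U"
      using assms finite_subset by auto
    then show "gsign U (S - U) * gmul a b U * c (S - U) = (\<Sum>T\<in>Pow U.
        gsign U (S - U) * gsign T (U - T) * a T * b (U - T) * c (S - U))"
      by (simp add: gmul_finite sum_distrib_left sum_distrib_right mult_ac)
  qed
  also have "\<dots> = (\<Sum>(U, T)\<in>Sigma (Pow S) Pow.
      gsign U (S - U) * gsign T (U - T) * a T * b (U - T) * c (S - U))"
    by (rule sum.Sigma) (use assms finite_subset in auto)
  finally show ?thesis .
qed

lemma gmul_gmul_right_finite:
  assumes "finite S"
  shows "gmul a (gmul b c) S = (\<Sum>(T, V)\<in>Sigma (Pow S) (\<lambda>T. Pow (S - T)).
           gsign T (S - T) * gsign V (S - T - V) * a T * b V * c (S - T - V))"
proof -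
  have "gmul a (gmul b c) S = (\<Sum>T\<in>Pow S. \<Sum>V\<in>Pow (S - T).
          gsign T (S - T) * gsign V (S - T - V) * a T * b V * c (S - T - V))"
    unfolding gmul_finite[OF assms]
  proof (rule sum.cong[OF refl])
    fix T
    have "finite (S - T)"
      using assms by auto
    then show "gsign T (S - T) * a T * gmul b c (S - T) = (\<Sum>V\<in>Pow (S - T).
        gsign T (S - T) * gsign V (S - T - V) * a T * b V * c (S - T - V))"
      by (simp add: gmul_finite sum_distrib_left sum_distrib_right mult_ac)
  qed
  also have "\<dots> = (\<Sum>(T, V)\<in>Sigma (Pow S) (\<lambda>T. Pow (S - T)).
      gsign T (S - T) * gsign V (S - T - V) * a T * b V * c (S - T - V))"
    by (rule sum.Sigma) (use assms in auto)
  finally show ?thesis .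
qed

lemma gmul_assoc: "gmul (gmul a b) c = gmul a (gmul b c)"
proof
  fix S :: "nat set"
  show "gmul (gmul a b) c S = gmul a (gmul b c) S"
  proof (cases "finite S")
    case True
    have "(\<Sum>(T, V)\<in>Sigma (Pow S) (\<lambda>T. Pow (S - T)).
            gsign T (S - T) * gsign V (S - T - V) * a T * b V * c (S - T - V)) =
          (\<Sum>(U, T)\<in>Sigma (Pow S) Pow.
            gsign U (S - U) * gsign T (U - T) * a T * b (U - T) * c (S - U))"
    proof (rule sum.reindex_bij_witness[of _ "\<lambda>(U, T). (T, U - T)" "\<lambda>(T, V). (T \<union> V, T)"])
      fix p assume "p \<in> Sigma (Pow S) (\<lambda>T. Pow (S - T))"
      then obtain T V where p: "p = (T, V)" "T \<subseteq> S" "V \<subseteq> S - T"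
        by auto
      have "gsign (T \<union> V) (S - T - V) * gsign T V = gsign T (V \<union> (S - T - V)) * gsign V (S - T - V)"
        by (rule gsign_assoc) (use p True in \<open>auto intro: finite_subset\<close>)
      moreover have "S - T = V \<union> (S - T - V)" "T \<union> V - T = V" "S - (T \<union> V) = S - T - V"
        using p by auto
      ultimately show "(case (case p of (T, V) \<Rightarrow> (T \<union> V, T)) of (U, T) \<Rightarrow>
            gsign U (S - U) * gsign T (U - T) * a T * b (U - T) * c (S - U)) =
          (case p of (T, V) \<Rightarrow> gsign T (S - T) * gsign V (S - T - V) * a T * b V * c (S - T - V))"
        using p by (simp add: mult_ac)
    qed auto
    then show ?thesis
      unfolding gmul_gmul_left_finite[OF True] gmul_gmul_right_finite[OF True] by simp
  qed (simp add: gmul_def)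
qed

lemma gmul_add_left: "gmul (a + b) c = gmul a c + gmul b c"
  by (rule ext) (simp add: gmul_def sum.distrib algebra_simps)

lemma gmul_add_right: "gmul a (b + c) = gmul a b + gmul a c"
  by (rule ext) (simp add: gmul_def sum.distrib algebra_simps)

lemma gmul_zero_right [simp]: "gmul a 0 = 0"
  by (rule ext) (simp add: gmul_def)

lemma gmul_uminus_left: "gmul (- a) c = - gmul a c"
  by (rule ext) (simp add: gmul_def sum_negf)

lemma gmul_uminus_right: "gmul a (- c) = - gmul a c"
  by (rule ext) (simp add: gmul_def sum_negf)

lemma gmul_gscale_left: "gmul (gscale k a) c = gscale k (gmul a c)"
  by (rule ext) (simp add: gmul_def gscale_def sum_distrib_left algebra_simps)

lemma gmul_gscale_right: "gmul a (gscale k c) = gscale k (gmul a c)"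
  by (rule ext) (simp add: gmul_def gscale_def sum_distrib_left algebra_simps)

lemma gmul_gone_left: "gmul gone a = (\<lambda>S. if finite S then a S else 0)"
proof
  fix S
  show "gmul gone a S = (if finite S then a S else 0)"
  proof (cases "finite S")
    case True
    have "gmul gone a S = (\<Sum>T\<in>Pow S. if T = {} then a S else 0)"
      unfolding gmul_finite[OF True] by (rule sum.cong) (auto simp: gone_def)
    also have "\<dots> = a S"
      using True by simp
    finally show ?thesis
      using True by simp
  qed (simp add: gmul_def)
qed

lemma gmul_gone_right: "gmul a gone = (\<lambda>S. if finite S then a S else 0)"
proof
  fix S
  show "gmul a gone S = (if finite S then a S else 0)"
  proof (cases "finite S")
    case True
    have "gmul a gone S = (\<Sum>T\<in>Pow S. if T = S then a S else 0)"
      unfolding gmul_finite[OF True] by (rule sum.cong) (auto simp: gone_def)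
    also have "\<dots> = a S"
      using True by simp
    finally show ?thesis
      using True by simp
  qed (simp add: gmul_def)
qed

lemma ghat_gmul: "ghat (gmul a b) = gmul (ghat a) (ghat b)"
proof
  fix S
  show "ghat (gmul a b) S = gmul (ghat a) (ghat b) S"
  proof (cases "finite S")
    case True
    show ?thesis
      unfolding ghat_def gmul_finite[OF True] sum_distrib_left
    proof (rule sum.cong[OF refl])
      fix T assume "T \<in> Pow S"
      then have "card S = card T + card (S - T)"
        using True by (metis Diff_partition PowD card_Un_disjoint Diff_disjoint finite_Diff finite_subset)
      then show "(-1) ^ card S * (gsign T (S - T) * a T * b (S - T)) =
          gsign T (S - T) * ((-1) ^ card T * a T) * ((-1) ^ card (S - T) * b (S - T))"
        by (simp add: power_add)
    qed
  qed (simp add: gmul_def ghat_def)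
qed

lemma gmul_flip_finite:
  assumes "finite S"
  shows "gmul b a S = (\<Sum>T\<in>Pow S. gsign (S - T) T * b (S - T) * a T)"
  unfolding gmul_finite[OF assms]
  by (rule sum.reindex_bij_witness[of _ "\<lambda>T. S - T" "\<lambda>T. S - T"]) (auto simp: double_diff)

lemma gmul_commute_even:
  assumes "geven a"
  shows "gmul a b = gmul b a"
proof
  fix S
  show "gmul a b S = gmul b a S"
  proof (cases "finite S")
    case True
    show ?thesis
      unfolding gmul_flip_finite[OF True, of b a] gmul_finite[OF True, of a b]
    proof (rule sum.cong[OF refl])
      fix T assume "T \<in> Pow S"
      then have "finite T" "finite (S - T)"
        using True by (auto intro: finite_subset)
      then show "gsign T (S - T) * a T * b (S - T) = gsign (S - T) T * b (S - T) * a T"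
        using assms gsign_swap[of T "S - T"] by (cases "a T = 0") (auto simp: geven_def)
    qed
  qed (simp add: gmul_def)
qed

lemma gmul_commute_odd:
  assumes "godd a"
  shows "gmul a b = gmul (ghat b) a"
proof
  fix S
  show "gmul a b S = gmul (ghat b) a S"
  proof (cases "finite S")
    case True
    show ?thesis
      unfolding gmul_flip_finite[OF True, of "ghat b" a] gmul_finite[OF True, of a b]
    proof (rule sum.cong[OF refl])
      fix T assume "T \<in> Pow S"
      then have "finite T" "finite (S - T)"
        using True by (auto intro: finite_subset)
      then show "gsign T (S - T) * a T * b (S - T) = gsign (S - T) T * ghat b (S - T) * a T"
        using assms gsign_swap[of T "S - T"]
        by (cases "a T = 0") (auto simp: godd_def ghat_def power_mult)
    qed
  qed (simp add: gmul_def)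
qed

lemma ghat_even: "geven a \<Longrightarrow> ghat a = a"
  by (rule ext) (auto simp: ghat_def geven_def)

lemma ghat_odd:
  assumes "godd a"
  shows "ghat a = - a"
proof
  fix S
  show "ghat a S = (- a) S"
    using assms by (cases "a S = 0") (auto simp: godd_def ghat_def neg_one_odd_power)
qed

text \<open>The product \<open>gmul\<close> vanishes on infinite index sets, so \<open>gone\<close> is a unit only for
  coefficient functions without junk values there.\<close>

typedef grassmann = "{a :: gr. \<forall>S. infinite S \<longrightarrow> a S = 0}"
  by (rule exI[of _ 0]) simp

setup_lifting type_definition_grassmann

instantiation grassmann :: ring_1
begin

lift_definition zero_grassmann :: grassmann is 0
  by simp

lift_definition one_grassmann :: grassmann is gone
  by (auto simp: gone_def)

lift_definition plus_grassmann :: "grassmann \<Rightarrow> grassmann \<Rightarrow> grassmann" is "(+)"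
  by simp

lift_definition minus_grassmann :: "grassmann \<Rightarrow> grassmann \<Rightarrow> grassmann" is "(-)"
  by simp

lift_definition uminus_grassmann :: "grassmann \<Rightarrow> grassmann" is uminus
  by simp

lift_definition times_grassmann :: "grassmann \<Rightarrow> grassmann \<Rightarrow> grassmann" is gmul
  by (simp add: gmul_def)

instance
proof
  fix a b c :: grassmann
  show "a * b * c = a * (b * c)"
    by transfer (rule gmul_assoc)
  show "a + b + c = a + (b + c)" "a + b = b + a" "0 + a = a" "- a + a = 0" "a - b = a + - b"
    by (transfer, simp add: algebra_simps)+
  show "(a + b) * c = a * c + b * c"
    by transfer (rule gmul_add_left)
  show "a * (b + c) = a * b + a * c"
    by transfer (rule gmul_add_right)
  show "1 * a = a"
    by transfer (auto simp: gmul_gone_left)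
  show "a * 1 = a"
    by transfer (auto simp: gmul_gone_right)
  show "(0::grassmann) \<noteq> 1"
    by transfer (auto simp: gone_def fun_eq_iff)
qed

end

lemma Rep_grassmann_0 [simp]: "Rep_grassmann 0 = 0"
  by (simp add: zero_grassmann.rep_eq)

lemma Rep_grassmann_eq_0_iff [simp]: "Rep_grassmann a = 0 \<longleftrightarrow> a = 0"
  by (metis Rep_grassmann_0 Rep_grassmann_inject)

lemma Rep_grassmann_add: "Rep_grassmann (a + b) = Rep_grassmann a + Rep_grassmann b"
  by (simp add: plus_grassmann.rep_eq)

lemma Rep_grassmann_mult: "Rep_grassmann (a * b) = gmul (Rep_grassmann a) (Rep_grassmann b)"
  by (simp add: times_grassmann.rep_eq)

lemma Rep_grassmann_sum: "Rep_grassmann (sum f A) = (\<Sum>x\<in>A. Rep_grassmann (f x))"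
  by (induction A rule: infinite_finite_induct) (auto simp: Rep_grassmann_add)

lift_definition hat :: "grassmann \<Rightarrow> grassmann" is ghat
  by (simp add: ghat_def)

lift_definition scalar :: "complex \<Rightarrow> grassmann" is "\<lambda>c. gscale c gone"
  by (auto simp: gscale_def gone_def)

definition is_even :: "grassmann \<Rightarrow> bool" where
  "is_even a \<longleftrightarrow> geven (Rep_grassmann a)"

definition is_odd :: "grassmann \<Rightarrow> bool" where
  "is_odd a \<longleftrightarrow> godd (Rep_grassmann a)"

lemma hat_mult: "hat (a * b) = hat a * hat b"
  by transfer (rule ghat_gmul)

lemma hat_add: "hat (a + b) = hat a + hat b"
  by transfer (auto simp: ghat_def fun_eq_iff algebra_simps)

lemma hat_0 [simp]: "hat 0 = 0"
  by transfer (auto simp: ghat_def fun_eq_iff)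

lemma hat_hat [simp]: "hat (hat a) = a"
  by transfer (simp add: ghat_def fun_eq_iff)

lemma hat_eq_0_iff [simp]: "hat a = 0 \<longleftrightarrow> a = 0"
  by (metis hat_0 hat_hat)

lemma hat_sum: "hat (sum f A) = (\<Sum>x\<in>A. hat (f x))"
  by (induction A rule: infinite_finite_induct) (auto simp: hat_add)

lemma hat_scalar [simp]: "hat (scalar c) = scalar c"
  by transfer (auto simp: ghat_def fun_eq_iff gone_def gscale_def)

lemma gmul_gone_left_finite_support: "\<forall>S. infinite S \<longrightarrow> a S = 0 \<Longrightarrow> gmul gone a = a"
  unfolding gmul_gone_left by (auto simp: fun_eq_iff)

lemma gmul_gone_right_finite_support: "\<forall>S. infinite S \<longrightarrow> a S = 0 \<Longrightarrow> gmul a gone = a"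
  unfolding gmul_gone_right by (auto simp: fun_eq_iff)

lemma gscale_gscale: "gscale c (gscale d a) = gscale (c * d) a"
  by (simp add: gscale_def fun_eq_iff mult.assoc)

lemma Rep_grassmann_scalar_mult: "Rep_grassmann (scalar c * a) = gscale c (Rep_grassmann a)"
  by transfer (simp only: gmul_gscale_left gmul_gone_left_finite_support)

lemma scalar_mult_scalar: "scalar c * scalar d = scalar (c * d)"
proof transfer
  fix c d
  have "gmul gone gone = gone"
    by (rule gmul_gone_left_finite_support) (simp add: gone_def)
  then show "gmul (gscale c gone) (gscale d gone) = gscale (c * d) gone"
    by (simp add: gmul_gscale_left gmul_gscale_right gscale_gscale mult.commute)
qed

lemma scalar_commute: "scalar c * a = a * scalar c"
  by transfer
    (simp only: gmul_gscale_left gmul_gscale_right gmul_gone_left_finite_support gmul_gone_right_finite_support)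

lemma scalar_add: "scalar (c + d) = scalar c + scalar d"
  by transfer (auto simp: gscale_def fun_eq_iff algebra_simps)

lemma scalar_1: "scalar 1 = 1"
  by transfer (auto simp: gscale_def fun_eq_iff)

lemma scalar_0: "scalar 0 = 0"
  by transfer (auto simp: gscale_def fun_eq_iff)

lemma scalar_uminus: "scalar (- c) = - scalar c"
  by transfer (auto simp: gscale_def fun_eq_iff)

lemma of_nat_eq_scalar: "(of_nat n :: grassmann) = scalar (of_nat n)"
  by (induction n) (auto simp: scalar_0 scalar_add scalar_1 add.commute)

lemma of_int_eq_scalar: "(of_int k :: grassmann) = scalar (of_int k)"
  by (cases k rule: int_cases) (simp_all add: of_nat_eq_scalar scalar_uminus scalar_add scalar_1 del: of_nat_Suc)

lemma Rep_grassmann_of_int_mult: "Rep_grassmann (of_int k * a) = gscale (of_int k) (Rep_grassmann a)"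
  by (simp add: of_int_eq_scalar Rep_grassmann_scalar_mult)

lemma is_even_commute: "is_even a \<Longrightarrow> a * b = b * a"
  unfolding is_even_def by transfer (rule gmul_commute_even)

lemma is_odd_commute: "is_odd a \<Longrightarrow> a * b = hat b * a"
  unfolding is_odd_def by transfer (rule gmul_commute_odd)

lemma hat_is_even: "is_even a \<Longrightarrow> hat a = a"
  unfolding is_even_def by transfer (rule ghat_even)

lemma hat_is_odd: "is_odd a \<Longrightarrow> hat a = - a"
  unfolding is_odd_def by transfer (rule ghat_odd)

lemma is_even_0 [simp]: "is_even 0"
  by (simp add: is_even_def geven_def)

lemma is_odd_0 [simp]: "is_odd 0"
  by (simp add: is_odd_def godd_def)

lemma is_even_scalar_mult: "is_even a \<Longrightarrow> is_even (scalar c * a)"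
  by (simp add: is_even_def geven_def Rep_grassmann_scalar_mult gscale_def)

lemma is_odd_scalar_mult: "is_odd a \<Longrightarrow> is_odd (scalar c * a)"
  by (simp add: is_odd_def godd_def Rep_grassmann_scalar_mult gscale_def)

section \<open>Grassmann-valued Laurent series\<close>

text \<open>The coefficient of \<open>w\<^sup>k\<close> in a series of type \<open>gls\<close> is the coefficient of
  \<open>z\<^sup>-\<^sup>k\<close>: the series in \<open>z[[z\<^sup>-\<^sup>1]]\<close> of the statement become Laurent series
  in \<open>w = 1/z\<close>, which are bounded below.\<close>

type_synonym gls = "grassmann fls"

lemma fls_times_nth_superset:
  fixes f g :: "'a::ring_1 fls"
  assumes "finite I" "\<And>i. f $$ i \<noteq> 0 \<Longrightarrow> g $$ (n - i) \<noteq> 0 \<Longrightarrow> i \<in> I"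
  shows "(f * g) $$ n = (\<Sum>i\<in>I. f $$ i * g $$ (n - i))"
proof -
  let ?J = "{i. f $$ i \<noteq> 0 \<and> g $$ (n - i) \<noteq> 0}"
  have "?J \<subseteq> {fls_subdegree f..n - fls_subdegree g}"
    using fls_subdegree_leI by fastforce
  then have "(f * g) $$ n = (\<Sum>i\<in>?J. f $$ i * g $$ (n - i))"
    unfolding fls_times_nth(2) by (intro sum.mono_neutral_right) auto
  also have "\<dots> = (\<Sum>i\<in>I. f $$ i * g $$ (n - i))"
    by (rule sum.mono_neutral_left) (use assms in auto)
  finally show ?thesis .
qed

lemma fls_times_nth_interval:
  fixes f g :: "'a::ring_1 fls"
  shows "(f * g) $$ n = (\<Sum>i\<in>{fls_subdegree f..n - fls_subdegree g}. f $$ i * g $$ (n - i))"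
  by (rule fls_times_nth_superset) (use fls_subdegree_leI in fastforce)+

lemma fls_mult_twist:
  fixes f g h :: "'a::ring_1 fls"
  assumes "\<And>i j. f $$ i * g $$ j = h $$ j * f $$ i" and "\<And>j. h $$ j = 0 \<longleftrightarrow> g $$ j = 0"
  shows "f * g = h * f"
proof (rule fls_eqI)
  fix n
  let ?I = "{fls_subdegree f..n - fls_subdegree g}"
  have "(h * f) $$ n = (\<Sum>i\<in>(\<lambda>i. n - i) ` ?I. h $$ i * f $$ (n - i))"
  proof (rule fls_times_nth_superset)
    fix i assume "h $$ i \<noteq> 0" "f $$ (n - i) \<noteq> 0"
    then have "fls_subdegree g \<le> i" "fls_subdegree f \<le> n - i"
      using assms(2) fls_subdegree_leI by auto
    then show "i \<in> (\<lambda>i. n - i) ` ?I"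
      by (auto simp: image_iff intro!: bexI[of _ "n - i"])
  qed simp
  also have "\<dots> = (\<Sum>i\<in>?I. h $$ (n - i) * f $$ i)"
    by (subst sum.reindex) (auto simp: inj_on_def)
  finally show "(f * g) $$ n = (h * f) $$ n"
    using assms(1) by (simp add: fls_times_nth_interval)
qed

definition fls_hat :: "gls \<Rightarrow> gls" where
  "fls_hat f = Abs_fls (\<lambda>n. hat (f $$ n))"

lemma fls_hat_nth [simp]: "fls_hat f $$ n = hat (f $$ n)"
  unfolding fls_hat_def by (rule nth_Abs_fls_lower_bound[of "fls_subdegree f"]) simp

lemma fls_hat_add: "fls_hat (f + g) = fls_hat f + fls_hat g"
  by (rule fls_eqI) (simp add: hat_add)

lemma fls_hat_0 [simp]: "fls_hat 0 = 0"
  by (rule fls_eqI) simp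

lemma fls_hat_fls_hat [simp]: "fls_hat (fls_hat f) = f"
  by (rule fls_eqI) simp

lemma fls_hat_mult: "fls_hat (f * g) = fls_hat f * fls_hat g"
proof (rule fls_eqI)
  fix n
  let ?I = "{fls_subdegree f..n - fls_subdegree g}"
  have "(fls_hat f * fls_hat g) $$ n = (\<Sum>i\<in>?I. fls_hat f $$ i * fls_hat g $$ (n - i))"
    by (rule fls_times_nth_superset) (use fls_subdegree_leI in fastforce)+
  then show "fls_hat (f * g) $$ n = (fls_hat f * fls_hat g) $$ n"
    by (simp add: fls_times_nth_interval hat_sum hat_mult)
qed

definition is_even_fls :: "gls \<Rightarrow> bool" where
  "is_even_fls f \<longleftrightarrow> (\<forall>n. is_even (f $$ n))"

definition is_odd_fls :: "gls \<Rightarrow> bool" where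
  "is_odd_fls f \<longleftrightarrow> (\<forall>n. is_odd (f $$ n))"

lemma is_even_fls_commute: "is_even_fls p \<Longrightarrow> p * x = x * p"
  by (rule fls_mult_twist) (auto simp: is_even_fls_def intro: is_even_commute)

lemma is_odd_fls_commute: "is_odd_fls p \<Longrightarrow> p * x = fls_hat x * p"
  by (rule fls_mult_twist) (auto simp: is_odd_fls_def is_odd_commute)

lemma fls_hat_is_even: "is_even_fls p \<Longrightarrow> fls_hat p = p"
  by (rule fls_eqI) (simp add: is_even_fls_def hat_is_even)

lemma fls_hat_is_odd: "is_odd_fls p \<Longrightarrow> fls_hat p = - p"
  by (rule fls_eqI) (simp add: is_odd_fls_def hat_is_odd)

text \<open>\<open>d/dz = - w\<^sup>2 d/dw\<close>.\<close>

definition ddz :: "gls \<Rightarrow> gls" where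
  "ddz f = - fls_shift (-2) (fls_deriv f)"

lemma ddz_nth: "ddz f $$ k = of_int (1 - k) * f $$ (k - 1)"
  by (simp add: ddz_def of_int_diff algebra_simps)

lemma ddz_mult: "ddz (f * g) = ddz f * g + f * ddz g"
  unfolding ddz_def by (simp add: fls_shifted_times_simps algebra_simps fls_shift_plus)

lemma ddz_add: "ddz (f + g) = ddz f + ddz g"
  by (rule fls_eqI) (simp add: ddz_nth algebra_simps)

lemma ddz_fls_hat: "ddz (fls_hat f) = fls_hat (ddz f)"
  by (rule fls_eqI) (simp add: ddz_nth hat_mult of_int_eq_scalar)

lemma is_odd_fls_ddz: "is_odd_fls f \<Longrightarrow> is_odd_fls (ddz f)"
  by (simp add: is_odd_fls_def ddz_nth of_int_eq_scalar is_odd_scalar_mult)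

definition fls_scalar :: "complex \<Rightarrow> gls" where
  "fls_scalar c = fls_const (scalar c)"

lemma fls_scalar_commute: "fls_scalar c * x = x * fls_scalar c"
  unfolding fls_scalar_def by (rule fls_mult_twist) (auto simp: scalar_commute)

lemma fls_scalar_left_commute: "x * (fls_scalar c * y) = fls_scalar c * (x * y)"
  by (metis fls_scalar_commute mult.assoc)

lemma fls_hat_fls_scalar [simp]: "fls_hat (fls_scalar c) = fls_scalar c"
  by (rule fls_eqI) (simp add: fls_scalar_def)

lemma ddz_fls_const [simp]: "ddz (fls_const c) = 0"
  by (rule fls_eqI) (simp add: ddz_nth)

lemma ddz_fls_scalar_mult: "ddz (fls_scalar c * f) = fls_scalar c * ddz f"
  by (simp add: ddz_mult fls_scalar_def)

lemma fls_scalar_mult: "fls_scalar c * fls_scalar d = fls_scalar (c * d)"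
  by (simp add: fls_scalar_def fls_const_mult_const scalar_mult_scalar)

lemma fls_scalar_add: "fls_scalar (c + d) = fls_scalar c + fls_scalar d"
  by (rule fls_eqI) (simp add: fls_scalar_def scalar_add)

lemma fls_scalar_1: "fls_scalar 1 = 1"
  by (simp add: fls_scalar_def scalar_1 fls_const_1)

section \<open>Superfunctions and the vector field\<close>

type_synonym sfun = "gls \<times> gls"

definition stimes :: "sfun \<Rightarrow> sfun \<Rightarrow> sfun" where
  "stimes F G = (fst F * fst G, fls_hat (fst F) * snd G + snd F * fst G)"

definition sfD :: "sfun \<Rightarrow> sfun" where
  "sfD F = (snd F, ddz (fst F))"

definition sscale :: "complex \<Rightarrow> sfun \<Rightarrow> sfun" where
  "sscale c F = (fls_scalar c * fst F, fls_scalar c * snd F)"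

definition is_even_sfun :: "sfun \<Rightarrow> bool" where
  "is_even_sfun H \<longleftrightarrow> is_even_fls (fst H) \<and> is_odd_fls (snd H)"

definition vfield :: "gls \<Rightarrow> gls \<Rightarrow> gls \<Rightarrow> sfun \<Rightarrow> sfun" where
  "vfield p m q F = (p * ddz (fst F) + m * snd F, p * ddz (snd F) + m * ddz (fst F) + q * snd F)"

definition vfield_defect :: "gls \<Rightarrow> gls \<Rightarrow> sfun" where
  "vfield_defect m q = (q, ddz m)"

lemma stimes_assoc: "stimes (stimes F G) H = stimes F (stimes G H)"
  by (simp add: stimes_def fls_hat_mult fls_hat_add algebra_simps)

lemma stimes_add_left: "stimes (F + G) H = stimes F H + stimes G H"
  by (simp add: stimes_def fls_hat_add algebra_simps)

lemma stimes_add_right: "stimes H (F + G) = stimes H F + stimes H G"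
  by (simp add: stimes_def algebra_simps)

lemma stimes_0_left [simp]: "stimes 0 H = 0"
  by (simp add: stimes_def zero_prod_def)

lemma stimes_0_right [simp]: "stimes H 0 = 0"
  by (simp add: stimes_def zero_prod_def)

lemma stimes_sum_left: "stimes (\<Sum>i\<in>A. F i) H = (\<Sum>i\<in>A. stimes (F i) H)"
  by (induction A rule: infinite_finite_induct) (auto simp: stimes_add_left)

lemma stimes_sum_right: "stimes H (\<Sum>i\<in>A. F i) = (\<Sum>i\<in>A. stimes H (F i))"
  by (induction A rule: infinite_finite_induct) (auto simp: stimes_add_right)

lemma stimes_even_commute:
  assumes "is_even_sfun H"
  shows "stimes H F = stimes F H"
proof -
  obtain h0 h1 where H: "H = (h0, h1)"
    by fastforce
  then have h: "is_even_fls h0" "is_odd_fls h1"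
    using assms by (auto simp: is_even_sfun_def)
  have "h0 * fst F = fst F * h0" "h0 * snd F = snd F * h0"
    using is_even_fls_commute[OF h(1)] by auto
  moreover have "h1 * fst F = fls_hat (fst F) * h1"
    using is_odd_fls_commute[OF h(2)] by auto
  ultimately show ?thesis
    using fls_hat_is_even[OF h(1)] by (simp add: H stimes_def add.commute)
qed

lemma stimes_even_left_commute:
  assumes "is_even_sfun H"
  shows "stimes H (stimes F G) = stimes F (stimes H G)"
  by (metis stimes_assoc stimes_even_commute[OF assms])

lemma sscale_add: "sscale c (F + G) = sscale c F + sscale c G"
  by (simp add: sscale_def algebra_simps)

lemma sscale_0 [simp]: "sscale c 0 = 0"
  by (simp add: sscale_def zero_prod_def)

lemma sscale_sum: "sscale c (\<Sum>i\<in>A. F i) = (\<Sum>i\<in>A. sscale c (F i))"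
  by (induction A rule: infinite_finite_induct) (auto simp: sscale_add)

lemma sscale_plus: "sscale (c + d) F = sscale c F + sscale d F"
  by (simp add: sscale_def fls_scalar_add algebra_simps)

lemma sscale_zero [simp]: "sscale 0 F = 0"
  by (simp add: sscale_def fls_scalar_def scalar_0 zero_prod_def)

lemma sscale_1 [simp]: "sscale 1 F = F"
  by (simp add: sscale_def fls_scalar_1)

lemma sscale_sscale: "sscale c (sscale d F) = sscale (c * d) F"
  by (simp add: sscale_def mult.assoc[symmetric] fls_scalar_mult)

lemma stimes_sscale_left: "stimes (sscale c F) G = sscale c (stimes F G)"
  by (simp add: sscale_def stimes_def fls_hat_mult algebra_simps)

lemma stimes_sscale_right: "stimes F (sscale c G) = sscale c (stimes F G)"
  by (simp add: sscale_def stimes_def fls_scalar_left_commute algebra_simps)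

lemma sfD_add: "sfD (F + G) = sfD F + sfD G"
  by (simp add: sfD_def ddz_add)

lemma sfD_0 [simp]: "sfD 0 = 0"
  by (simp add: sfD_def zero_prod_def ddz_def)

lemma sfD_sum: "sfD (\<Sum>i\<in>A. F i) = (\<Sum>i\<in>A. sfD (F i))"
  by (induction A rule: infinite_finite_induct) (auto simp: sfD_add)

lemma sfD_sscale: "sfD (sscale c F) = sscale c (sfD F)"
  by (simp add: sfD_def sscale_def ddz_fls_scalar_mult)

lemma vfield_add: "vfield p m q (F + G) = vfield p m q F + vfield p m q G"
  by (simp add: vfield_def ddz_add algebra_simps)

lemma vfield_0 [simp]: "vfield p m q 0 = 0"
  by (simp add: vfield_def zero_prod_def ddz_def)

lemma vfield_sum: "vfield p m q (\<Sum>i\<in>A. F i) = (\<Sum>i\<in>A. vfield p m q (F i))"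
  by (induction A rule: infinite_finite_induct) (auto simp: vfield_add)

lemma vfield_sscale: "vfield p m q (sscale c F) = sscale c (vfield p m q F)"
  by (simp add: vfield_def sscale_def ddz_fls_scalar_mult fls_scalar_left_commute algebra_simps)

lemma vfield_stimes:
  assumes p: "is_even_fls p" and m: "is_odd_fls m" and q: "is_even_fls q"
  shows "vfield p m q (stimes F G) = stimes (vfield p m q F) G + stimes F (vfield p m q G)"
proof -
  have "p * (x * y) = x * (p * y)" "q * (x * y) = x * (q * y)" for x y
    by (metis is_even_fls_commute p q mult.assoc)+
  moreover have "m * (x * y) = fls_hat x * (m * y)" for x y
    by (metis is_odd_fls_commute[OF m] mult.assoc)
  ultimately show ?thesis
    using fls_hat_is_even[OF p] fls_hat_is_odd[OF m]
    by (simp add: vfield_def stimes_def ddz_mult ddz_add ddz_fls_hat fls_hat_mult fls_hat_add algebra_simps)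
qed

lemma sfD_vfield:
  assumes "is_even_fls q" and "ddz p = q + q"
  shows "sfD (vfield p m q G) = vfield p m q (sfD G) + stimes (vfield_defect m q) (sfD G)"
  using assms fls_hat_is_even
  by (simp add: vfield_def stimes_def sfD_def vfield_defect_def ddz_mult ddz_add algebra_simps)

lemma is_even_sfun_vfield_defect: "is_even_fls q \<Longrightarrow> is_odd_fls m \<Longrightarrow> is_even_sfun (vfield_defect m q)"
  by (simp add: is_even_sfun_def vfield_defect_def is_odd_fls_ddz)

lemma sum_sscale_pascal:
  "(\<Sum>i\<le>k. sscale (of_nat (k choose i)) (g (Suc i) (k - i) + g i (Suc k - i))) =
   (\<Sum>i\<le>Suc k. sscale (of_nat (Suc k choose i)) (g i (Suc k - i)))"
proof -
  have "(\<Sum>i\<le>k. sscale (of_nat (k choose i)) (g i (Suc k - i))) =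
        (\<Sum>i\<le>Suc k. sscale (of_nat (k choose i)) (g i (Suc k - i)))"
    by (simp add: binomial_eq_0)
  also have "\<dots> = g 0 (Suc k) + (\<Sum>i\<le>k. sscale (of_nat (k choose Suc i)) (g (Suc i) (k - i)))"
    by (subst sum.atMost_Suc_shift) simp
  finally have shifted: "(\<Sum>i\<le>k. sscale (of_nat (k choose i)) (g i (Suc k - i))) =
      g 0 (Suc k) + (\<Sum>i\<le>k. sscale (of_nat (k choose Suc i)) (g (Suc i) (k - i)))" .
  have "(\<Sum>i\<le>Suc k. sscale (of_nat (Suc k choose i)) (g i (Suc k - i))) =
      g 0 (Suc k) + (\<Sum>i\<le>k. sscale (of_nat (Suc k choose Suc i)) (g (Suc i) (k - i)))"
    by (subst sum.atMost_Suc_shift) simp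
  also have "\<dots> = g 0 (Suc k) + (\<Sum>i\<le>k. sscale (of_nat (k choose i)) (g (Suc i) (k - i))) +
                  (\<Sum>i\<le>k. sscale (of_nat (k choose Suc i)) (g (Suc i) (k - i)))"
    by (simp add: sscale_plus sum.distrib add.assoc)
  finally show ?thesis
    using shifted by (simp add: sscale_add sum.distrib algebra_simps)
qed

definition zvar :: sfun where
  "zvar = (fls_X_inv, 0)"

definition thvar :: sfun where
  "thvar = (0, 1)"

lemma sfD_zvar: "sfD zvar = thvar"
  by (auto simp: sfD_def zvar_def thvar_def ddz_nth intro!: fls_eqI)

lemma sfD_thvar: "sfD thvar = (1, 0)"
  by (simp add: sfD_def thvar_def ddz_def)

lemma stimes_thvar_one: "stimes thvar (1, 0) = thvar"
  by (simp add: stimes_def thvar_def)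

lemma sfD_vfield_power:
  assumes p: "is_even_fls p" and m: "is_odd_fls m" and q: "is_even_fls q" and pq: "ddz p = q + q"
  shows "sfD ((vfield p m q ^^ k) zvar) = (\<Sum>i\<le>k. sscale (of_nat (k choose i))
           (stimes ((vfield p m q ^^ i) thvar) (sfD ((vfield p m q ^^ (k - i)) thvar))))"
proof (induction k)
  case 0
  then show ?case
    by (simp add: sfD_zvar sfD_thvar stimes_thvar_one)
next
  case (Suc k)
  let ?Y = "vfield p m q" and ?h = "vfield_defect m q"
  have commute: "sfD (?Y G) = ?Y (sfD G) + stimes ?h (sfD G)" for G
    by (rule sfD_vfield[OF q pq])
  have step: "?Y (stimes ((?Y ^^ i) thvar) (sfD ((?Y ^^ (k - i)) thvar))) +
        stimes ?h (stimes ((?Y ^^ i) thvar) (sfD ((?Y ^^ (k - i)) thvar)))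
      = stimes ((?Y ^^ Suc i) thvar) (sfD ((?Y ^^ (k - i)) thvar)) +
        stimes ((?Y ^^ i) thvar) (sfD ((?Y ^^ (Suc k - i)) thvar))"
    if "i \<le> k" for i
  proof -
    have "Suc k - i = Suc (k - i)"
      using that by simp
    then show ?thesis
      using commute stimes_even_left_commute[OF is_even_sfun_vfield_defect[OF q m]]
      by (simp add: vfield_stimes[OF p m q] stimes_add_right add.assoc)
  qed
  have "sfD ((?Y ^^ Suc k) zvar) = ?Y (sfD ((?Y ^^ k) zvar)) + stimes ?h (sfD ((?Y ^^ k) zvar))"
    by (simp add: commute)
  also have "\<dots> = (\<Sum>i\<le>k. sscale (of_nat (k choose i))
      (?Y (stimes ((?Y ^^ i) thvar) (sfD ((?Y ^^ (k - i)) thvar))) +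
       stimes ?h (stimes ((?Y ^^ i) thvar) (sfD ((?Y ^^ (k - i)) thvar)))))"
    unfolding Suc.IH
    by (simp add: vfield_sum vfield_sscale stimes_sum_right stimes_sscale_right sscale_add sum.distrib)
  also have "\<dots> = (\<Sum>i\<le>k. sscale (of_nat (k choose i))
      (stimes ((?Y ^^ Suc i) thvar) (sfD ((?Y ^^ (k - i)) thvar)) +
       stimes ((?Y ^^ i) thvar) (sfD ((?Y ^^ (Suc k - i)) thvar))))"
    by (rule sum.cong) (simp_all add: step)
  also have "\<dots> = (\<Sum>i\<le>Suc k. sscale (of_nat (Suc k choose i))
      (stimes ((?Y ^^ i) thvar) (sfD ((?Y ^^ (Suc k - i)) thvar))))"
    by (rule sum_sscale_pascal[where g = "\<lambda>i j. stimes ((?Y ^^ i) thvar) (sfD ((?Y ^^ j) thvar))"])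
  finally show ?case .
qed

section \<open>Weights\<close>

text \<open>\<open>z\<close> has weight 2 and \<open>\<theta>\<close> weight 1, so \<open>w\<^sup>k\<close> has weight \<open>-2k\<close>.\<close>

definition fls_weight_le :: "int \<Rightarrow> 'a::zero fls \<Rightarrow> bool" where
  "fls_weight_le d f \<longleftrightarrow> (\<forall>k. f $$ k \<noteq> 0 \<longrightarrow> - 2 * k \<le> d)"

definition weight_le :: "int \<Rightarrow> sfun \<Rightarrow> bool" where
  "weight_le d F \<longleftrightarrow> fls_weight_le d (fst F) \<and> fls_weight_le (d - 1) (snd F)"

lemma fls_weight_le_mono: "fls_weight_le d f \<Longrightarrow> d \<le> d' \<Longrightarrow> fls_weight_le d' f"
  by (force simp: fls_weight_le_def)

lemma fls_weight_le_add: "fls_weight_le d f \<Longrightarrow> fls_weight_le d g \<Longrightarrow> fls_weight_le d (f + g)"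
  by (force simp: fls_weight_le_def)

lemma fls_weight_le_hat: "fls_weight_le d f \<Longrightarrow> fls_weight_le d (fls_hat f)"
  by (simp add: fls_weight_le_def)

lemma fls_weight_le_scalar_mult: "fls_weight_le d f \<Longrightarrow> fls_weight_le d (fls_scalar c * f)"
  by (force simp: fls_weight_le_def fls_scalar_def)

lemma fls_weight_le_ddz:
  assumes "fls_weight_le d f"
  shows "fls_weight_le (d - 2) (ddz f)"
  unfolding fls_weight_le_def
proof (intro allI impI)
  fix k assume "ddz f $$ k \<noteq> 0"
  then have "f $$ (k - 1) \<noteq> 0"
    by (auto simp: ddz_nth)
  then have "- 2 * (k - 1) \<le> d"
    using assms unfolding fls_weight_le_def by blast
  then show "- 2 * k \<le> d - 2"
    by simp
qed

lemma fls_weight_le_mult: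
  fixes f g :: "'a::ring_1 fls"
  assumes "fls_weight_le a f" "fls_weight_le b g" "a + b \<le> c"
  shows "fls_weight_le c (f * g)"
  unfolding fls_weight_le_def
proof (intro allI impI)
  fix n assume "(f * g) $$ n \<noteq> 0"
  then have "(\<Sum>i = fls_subdegree f..n - fls_subdegree g. f $$ i * g $$ (n - i)) \<noteq> 0"
    by (simp add: fls_times_nth(2))
  then obtain i where "f $$ i * g $$ (n - i) \<noteq> 0"
    by (meson sum.neutral)
  then have "f $$ i \<noteq> 0" "g $$ (n - i) \<noteq> 0"
    by auto
  then have "- 2 * i \<le> a" "- 2 * (n - i) \<le> b"
    using assms(1,2) unfolding fls_weight_le_def by blast+
  then show "- 2 * n \<le> c"
    using assms(3) by (simp add: algebra_simps)
qed

lemma fls_weight_le_vanish: "fls_weight_le d f \<Longrightarrow> d < - 2 * m \<Longrightarrow> f $$ m = 0"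
  unfolding fls_weight_le_def by (meson not_le)

lemma weight_le_vanish: "weight_le d F \<Longrightarrow> d < - 2 * m \<Longrightarrow> fst F $$ m = 0 \<and> snd F $$ m = 0"
  unfolding weight_le_def by (auto intro: fls_weight_le_vanish)

lemma weight_le_mono: "weight_le d F \<Longrightarrow> d \<le> d' \<Longrightarrow> weight_le d' F"
  by (auto simp: weight_le_def intro: fls_weight_le_mono)

lemma weight_le_0 [simp]: "weight_le d 0"
  by (simp add: weight_le_def fls_weight_le_def)

lemma weight_le_add: "weight_le d F \<Longrightarrow> weight_le d G \<Longrightarrow> weight_le d (F + G)"
  by (simp add: weight_le_def fls_weight_le_add)

lemma weight_le_sum: "(\<And>i. i \<in> A \<Longrightarrow> weight_le d (F i)) \<Longrightarrow> weight_le d (\<Sum>i\<in>A. F i)"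
  by (induction A rule: infinite_finite_induct) (auto intro: weight_le_add)

lemma weight_le_sscale: "weight_le d F \<Longrightarrow> weight_le d (sscale c F)"
  by (simp add: weight_le_def sscale_def fls_weight_le_scalar_mult)

lemma weight_le_stimes:
  assumes "weight_le a F" "weight_le b G"
  shows "weight_le (a + b) (stimes F G)"
proof -
  have "fls_weight_le a (fls_hat (fst F))" "fls_weight_le (a - 1) (snd F)"
       "fls_weight_le b (fst G)" "fls_weight_le (b - 1) (snd G)"
    using assms fls_weight_le_hat by (auto simp: weight_le_def)
  then have "fls_weight_le (a + b - 1) (fls_hat (fst F) * snd G + snd F * fst G)"
    by (intro fls_weight_le_add fls_weight_le_mult[of a _ "b - 1"] fls_weight_le_mult[of "a - 1" _ b]) auto
  moreover have "fls_weight_le (a + b) (fst F * fst G)"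
    using assms by (auto simp: weight_le_def intro: fls_weight_le_mult)
  ultimately show ?thesis
    by (simp add: weight_le_def stimes_def)
qed

lemma weight_le_sfD: "weight_le d F \<Longrightarrow> weight_le (d - 1) (sfD F)"
  unfolding weight_le_def sfD_def using fls_weight_le_ddz by fastforce

lemma weight_le_vfield:
  assumes "fls_weight_le 0 p" "fls_weight_le 0 m" "fls_weight_le (-2) q" "weight_le d F"
  shows "weight_le (d - 1) (vfield p m q F)"
proof -
  have F: "fls_weight_le d (fst F)" "fls_weight_le (d - 1) (snd F)"
    using assms(4) by (auto simp: weight_le_def)
  note ddz = fls_weight_le_ddz[OF F(1)] fls_weight_le_ddz[OF F(2)]
  have "fls_weight_le (d - 1) (p * ddz (fst F) + m * snd F)"
    by (intro fls_weight_le_add fls_weight_le_mult[OF assms(1) ddz(1)]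
        fls_weight_le_mult[OF assms(2) F(2)]) auto
  moreover have "fls_weight_le (d - 2) (p * ddz (snd F) + m * ddz (fst F) + q * snd F)"
    by (intro fls_weight_le_add fls_weight_le_mult[OF assms(1) ddz(2)]
        fls_weight_le_mult[OF assms(2) ddz(1)] fls_weight_le_mult[OF assms(3) F(2)]) auto
  ultimately show ?thesis
    by (simp add: weight_le_def vfield_def)
qed

lemma weight_le_vfield_power:
  assumes "fls_weight_le 0 p" "fls_weight_le 0 m" "fls_weight_le (-2) q" "weight_le d F"
  shows "weight_le (d - int k) ((vfield p m q ^^ k) F)"
proof (induction k)
  case 0
  then show ?case
    using assms(4) by simp
next
  case (Suc k)
  then show ?case
    using weight_le_vfield[OF assms(1-3) Suc] by (simp add: algebra_simps)
qed

lemma weight_le_zvar: "weight_le 2 zvar"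
  by (auto simp: weight_le_def fls_weight_le_def zvar_def)

lemma weight_le_thvar: "weight_le 1 thvar"
  by (auto simp: weight_le_def fls_weight_le_def thvar_def fls_one_nth split: if_splits)

definition fls_agree_upto :: "int \<Rightarrow> 'a::zero fls \<Rightarrow> 'a fls \<Rightarrow> bool" where
  "fls_agree_upto n f g \<longleftrightarrow> (\<forall>i\<le>n. f $$ i = g $$ i)"

definition fls_is_fps :: "'a::zero fls \<Rightarrow> bool" where
  "fls_is_fps f \<longleftrightarrow> (\<forall>i<0. f $$ i = 0)"

definition agree_upto :: "int \<Rightarrow> sfun \<Rightarrow> sfun \<Rightarrow> bool" where
  "agree_upto n F G \<longleftrightarrow> fls_agree_upto n (fst F) (fst G) \<and> fls_agree_upto n (snd F) (snd G)"

definition is_fps :: "sfun \<Rightarrow> bool" where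
  "is_fps F \<longleftrightarrow> fls_is_fps (fst F) \<and> fls_is_fps (snd F)"

lemma fls_times_nth_fps:
  fixes f g :: "'a::ring_1 fls"
  assumes "fls_is_fps f" "fls_is_fps g"
  shows "(f * g) $$ k = (\<Sum>i\<in>{0..k}. f $$ i * g $$ (k - i))"
proof (rule fls_times_nth_superset)
  fix i assume "f $$ i \<noteq> 0" "g $$ (k - i) \<noteq> 0"
  then have "\<not> i < 0" "\<not> k - i < 0"
    using assms unfolding fls_is_fps_def by blast+
  then show "i \<in> {0..k}"
    by simp
qed simp

lemma fls_agree_upto_mult:
  fixes f f' g g' :: "'a::ring_1 fls"
  assumes "fls_is_fps f" "fls_is_fps f'" "fls_is_fps g" "fls_is_fps g'"
    and "fls_agree_upto n f f'" "fls_agree_upto n g g'"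
  shows "fls_agree_upto n (f * g) (f' * g')"
  unfolding fls_agree_upto_def
proof (intro allI impI)
  fix k assume "k \<le> n"
  then have "f $$ i * g $$ (k - i) = f' $$ i * g' $$ (k - i)" if "i \<in> {0..k}" for i
    using assms(5,6) that unfolding fls_agree_upto_def by simp
  then show "(f * g) $$ k = (f' * g') $$ k"
    unfolding fls_times_nth_fps[OF assms(1,3)] fls_times_nth_fps[OF assms(2,4)]
    by (rule sum.cong[OF refl])
qed

lemma fls_agree_upto_add:
  "fls_agree_upto n f f' \<Longrightarrow> fls_agree_upto n g g' \<Longrightarrow> fls_agree_upto n (f + g) (f' + g')"
  by (simp add: fls_agree_upto_def)

lemma agree_upto_stimes:
  assumes "is_fps F" "is_fps F'" "is_fps G" "is_fps G'" "agree_upto n F F'" "agree_upto n G G'"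
  shows "agree_upto n (stimes F G) (stimes F' G')"
proof -
  have "fls_is_fps (fls_hat (fst F))" "fls_is_fps (fls_hat (fst F'))"
       "fls_agree_upto n (fls_hat (fst F)) (fls_hat (fst F'))"
    using assms(1,2,5) by (simp_all add: is_fps_def fls_is_fps_def agree_upto_def fls_agree_upto_def)
  then show ?thesis
    using assms unfolding agree_upto_def is_fps_def stimes_def fst_conv snd_conv
    by (intro conjI fls_agree_upto_add fls_agree_upto_mult) simp_all
qed

lemma agree_upto_sfD:
  assumes "agree_upto n F G"
  shows "agree_upto n (sfD F) (sfD G)"
proof -
  have "fst F $$ (k - 1) = fst G $$ (k - 1)" if "k \<le> n" for k
    using assms that unfolding agree_upto_def fls_agree_upto_def by simp
  then show ?thesis
    using assms by (simp add: agree_upto_def fls_agree_upto_def sfD_def ddz_nth)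
qed

lemma is_fps_sfD:
  assumes "is_fps F"
  shows "is_fps (sfD F)"
proof -
  have "fst F $$ (k - 1) = 0" if "k < 0" for k
    using assms that unfolding is_fps_def fls_is_fps_def by simp
  then show ?thesis
    using assms by (simp add: is_fps_def fls_is_fps_def sfD_def ddz_nth)
qed

lemma is_fps_weight_le:
  assumes "weight_le d F" "d \<le> 1"
  shows "is_fps F"
proof -
  have "fst F $$ i = 0 \<and> snd F $$ i = 0" if "i < 0" for i
    by (rule weight_le_vanish[OF assms(1)]) (use assms(2) that in linarith)
  then show ?thesis
    by (simp add: is_fps_def fls_is_fps_def)
qed

lemma agree_upto_sum_subset:
  assumes "finite B" "A \<subseteq> B"
    and "\<And>x i. x \<in> B - A \<Longrightarrow> i \<le> n \<Longrightarrow> fst (X x) $$ i = 0 \<and> snd (X x) $$ i = 0"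
  shows "agree_upto n (\<Sum>x\<in>A. X x) (\<Sum>x\<in>B. X x)"
  unfolding agree_upto_def fls_agree_upto_def fst_sum snd_sum fls_nth_sum
  using assms by (auto intro!: sum.mono_neutral_left)

lemma agree_upto_eq:
  assumes "\<And>n. agree_upto n F G"
  shows "F = G"
proof (rule prod_eqI; rule fls_eqI)
  fix n
  show "fst F $$ n = fst G $$ n" "snd F $$ n = snd G $$ n"
    using assms[of n] by (simp_all add: agree_upto_def fls_agree_upto_def)
qed

section \<open>The exponential of the vector field\<close>

text \<open>The exponential series is summed coefficientwise over the nonzero terms; were there
  infinitely many, the sum would be the junk value 0. The weight bounds below rule this out.\<close>

definition exp_coeff :: "(sfun \<Rightarrow> sfun) \<Rightarrow> (sfun \<Rightarrow> gls) \<Rightarrow> sfun \<Rightarrow> int \<Rightarrow> grassmann" where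
  "exp_coeff Y sel F m =
     (\<Sum>k | sel ((Y ^^ k) F) $$ m \<noteq> 0. scalar (inverse (fact k)) * sel ((Y ^^ k) F) $$ m)"

definition sexp :: "(sfun \<Rightarrow> sfun) \<Rightarrow> sfun \<Rightarrow> sfun" where
  "sexp Y F = (Abs_fls (exp_coeff Y fst F), Abs_fls (exp_coeff Y snd F))"

definition exp_partial :: "(sfun \<Rightarrow> sfun) \<Rightarrow> nat \<Rightarrow> sfun \<Rightarrow> sfun" where
  "exp_partial Y K F = (\<Sum>k\<le>K. sscale (inverse (fact k)) ((Y ^^ k) F))"

lemma exp_partial_nth:
  assumes "sel = fst \<or> sel = snd"
  shows "sel (exp_partial Y K F) $$ m = (\<Sum>k\<le>K. scalar (inverse (fact k)) * sel ((Y ^^ k) F) $$ m)"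
  using assms by (auto simp: exp_partial_def fst_sum snd_sum fls_nth_sum sscale_def fls_scalar_def)

lemma exp_coeff_eq_exp_partial:
  assumes weights: "\<And>k. weight_le (d - int k) ((Y ^^ k) F)" and sel: "sel = fst \<or> sel = snd"
    and K: "d + 2 * m + 1 \<le> int K"
  shows "exp_coeff Y sel F m = sel (exp_partial Y K F) $$ m"
proof -
  have "{k. sel ((Y ^^ k) F) $$ m \<noteq> 0} \<subseteq> {..K}"
  proof
    fix k assume "k \<in> {k. sel ((Y ^^ k) F) $$ m \<noteq> 0}"
    then have "\<not> d - int k < - 2 * m"
      using weight_le_vanish[OF weights] sel by auto
    then show "k \<in> {..K}"
      using K by simp
  qed
  then show ?thesis
    unfolding exp_coeff_def exp_partial_nth[OF sel] by (intro sum.mono_neutral_left) auto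
qed

lemma sexp_nth:
  assumes weights: "\<And>k. weight_le (d - int k) ((Y ^^ k) F)" and sel: "sel = fst \<or> sel = snd"
  shows "sel (sexp Y F) $$ m = exp_coeff Y sel F m"
proof -
  have "exp_coeff Y sel F i = 0" if "i < - \<bar>d\<bar>" for i
  proof -
    have "sel ((Y ^^ k) F) $$ i = 0" for k
      using weight_le_vanish[OF weights, of k i] sel that by auto
    then show ?thesis
      by (simp add: exp_coeff_def)
  qed
  then have "Abs_fls (exp_coeff Y sel F) $$ m = exp_coeff Y sel F m"
    by (intro nth_Abs_fls_ex_lower_bound) blast
  then show ?thesis
    using sel unfolding sexp_def by auto
qed

lemma agree_upto_sexp_exp_partial:
  assumes "\<And>k. weight_le (d - int k) ((Y ^^ k) F)" and "d + 2 * n + 1 \<le> int K"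
  shows "agree_upto n (sexp Y F) (exp_partial Y K F)"
  using assms sexp_nth[OF assms(1)] exp_coeff_eq_exp_partial[OF assms(1)]
  by (simp add: agree_upto_def fls_agree_upto_def)

lemma weight_le_exp_partial:
  assumes "\<And>k. weight_le (d - int k) ((Y ^^ k) F)"
  shows "weight_le d (exp_partial Y K F)"
  unfolding exp_partial_def by (intro weight_le_sum weight_le_sscale weight_le_mono[OF assms]) simp

lemma is_fps_sexp:
  assumes weights: "\<And>k. weight_le (d - int k) ((Y ^^ k) F)" and "d \<le> 1"
  shows "is_fps (sexp Y F)"
proof -
  have "fst (sexp Y F) $$ i = 0 \<and> snd (sexp Y F) $$ i = 0" if "i < 0" for i
  proof -
    let ?K = "nat (d + 2 * i + 1)"
    have "agree_upto i (sexp Y F) (exp_partial Y ?K F)"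
      by (rule agree_upto_sexp_exp_partial[OF weights]) simp
    moreover have "is_fps (exp_partial Y ?K F)"
      by (rule is_fps_weight_le[OF weight_le_exp_partial[OF weights] assms(2)])
    ultimately show ?thesis
      using that by (simp add: agree_upto_def fls_agree_upto_def is_fps_def fls_is_fps_def)
  qed
  then show ?thesis
    by (simp add: is_fps_def fls_is_fps_def)
qed

lemma sfD_exp_partial_cauchy:
  assumes "\<And>k. sfD ((Y ^^ k) Z) = (\<Sum>i\<le>k. sscale (of_nat (k choose i)) (G i (k - i)))"
  shows "sfD (exp_partial Y K Z) =
           (\<Sum>(i, j)\<in>{(i, j). i + j \<le> K}. sscale (inverse (fact i) * inverse (fact j)) (G i j))"
proof -
  have "sfD (exp_partial Y K Z) =
      (\<Sum>k\<le>K. \<Sum>i\<le>k. sscale (inverse (fact i) * inverse (fact (k - i))) (G i (k - i)))"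
    unfolding exp_partial_def sfD_sum sfD_sscale assms sscale_sum sscale_sscale
  proof (intro sum.cong refl)
    fix k i :: nat assume "i \<in> {..k}"
    then have "inverse (fact k) * of_nat (k choose i) = inverse (fact i) * (inverse (fact (k - i)) :: complex)"
      by (simp add: binomial_fact field_simps)
    then show "sscale (inverse (fact k) * of_nat (k choose i)) (G i (k - i)) =
        sscale (inverse (fact i) * inverse (fact (k - i))) (G i (k - i))"
      by simp
  qed
  then show ?thesis
    by (simp add: sum.triangle_reindex_eq)
qed

lemma stimes_exp_partial_cauchy:
  "stimes (exp_partial Y K \<Theta>) (sfD (exp_partial Y K \<Theta>)) =
     (\<Sum>(i, j)\<in>{..K} \<times> {..K}. sscale (inverse (fact i) * inverse (fact j))
        (stimes ((Y ^^ i) \<Theta>) (sfD ((Y ^^ j) \<Theta>))))"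
  unfolding exp_partial_def sfD_sum sfD_sscale stimes_sum_left stimes_sum_right
    stimes_sscale_left stimes_sscale_right sscale_sum sscale_sscale sum.cartesian_product[symmetric]
  by (subst sum.swap) (simp add: mult.commute)

lemma agree_upto_triangle_square:
  assumes "\<And>i j. weight_le (1 - int i - int j) (X (i, j))" and "2 * n + 3 \<le> int K"
  shows "agree_upto n (\<Sum>x\<in>{(i, j). i + j \<le> K}. X x) (\<Sum>x\<in>{..K} \<times> {..K}. X x)"
proof (rule agree_upto_sum_subset)
  fix x k assume x: "x \<in> {..K} \<times> {..K} - {(i, j). i + j \<le> K}" and "k \<le> n"
  then obtain i j where "x = (i, j)" "1 - int i - int j < - 2 * k"
    using assms(2) by force
  then show "fst (X x) $$ k = 0 \<and> snd (X x) $$ k = 0"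
    using weight_le_vanish[OF assms(1)] by simp
qed auto

lemma sfD_sexp_vfield:
  assumes parity: "is_even_fls p" "is_odd_fls m" "is_even_fls q" and pq: "ddz p = q + q"
    and weights: "fls_weight_le 0 p" "fls_weight_le 0 m" "fls_weight_le (-2) q"
  shows "sfD (sexp (vfield p m q) zvar) =
           stimes (sexp (vfield p m q) thvar) (sfD (sexp (vfield p m q) thvar))"
proof (rule agree_upto_eq)
  fix n
  let ?Y = "vfield p m q"
  let ?X = "\<lambda>(i, j). sscale (inverse (fact i) * inverse (fact j))
              (stimes ((?Y ^^ i) thvar) (sfD ((?Y ^^ j) thvar)))"
  define K where "K = nat (2 * n + 3)"
  have wZ: "weight_le (2 - int k) ((?Y ^^ k) zvar)" for k
    by (rule weight_le_vfield_power[OF weights weight_le_zvar])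
  have wT: "weight_le (1 - int k) ((?Y ^^ k) thvar)" for k
    by (rule weight_le_vfield_power[OF weights weight_le_thvar])
  have wX: "weight_le (1 - int i - int j) (?X (i, j))" for i j
    using weight_le_stimes[OF wT[of i] weight_le_sfD[OF wT[of j]]] by (simp add: weight_le_sscale)
  have "agree_upto n (sfD (sexp ?Y zvar)) (sfD (exp_partial ?Y K zvar))"
    by (intro agree_upto_sfD agree_upto_sexp_exp_partial[OF wZ]) (simp add: K_def)
  moreover have "sfD (exp_partial ?Y K zvar) = (\<Sum>x\<in>{(i, j). i + j \<le> K}. ?X x)"
    by (rule sfD_exp_partial_cauchy[OF sfD_vfield_power[OF parity pq]])
  moreover have "agree_upto n (\<Sum>x\<in>{(i, j). i + j \<le> K}. ?X x) (\<Sum>x\<in>{..K} \<times> {..K}. ?X x)"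
    by (rule agree_upto_triangle_square[OF wX]) (simp add: K_def)
  moreover have "(\<Sum>x\<in>{..K} \<times> {..K}. ?X x) = stimes (exp_partial ?Y K thvar) (sfD (exp_partial ?Y K thvar))"
    by (simp add: stimes_exp_partial_cauchy case_prod_beta)
  moreover have "agree_upto n (stimes (exp_partial ?Y K thvar) (sfD (exp_partial ?Y K thvar)))
      (stimes (sexp ?Y thvar) (sfD (sexp ?Y thvar)))"
  proof -
    have "agree_upto n (exp_partial ?Y K thvar) (sexp ?Y thvar)"
      using agree_upto_sexp_exp_partial[OF wT, of n K] by (simp add: K_def agree_upto_def fls_agree_upto_def)
    moreover have "is_fps (exp_partial ?Y K thvar)" "is_fps (sexp ?Y thvar)"
      using is_fps_weight_le[OF weight_le_exp_partial[OF wT]] is_fps_sexp[OF wT] by simp_all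
    ultimately show ?thesis
      by (intro agree_upto_stimes agree_upto_sfD is_fps_sfD)
  qed
  ultimately show "agree_upto n (sfD (sexp ?Y zvar)) (stimes (sexp ?Y thvar) (sfD (sexp ?Y thvar)))"
    by (simp add: agree_upto_def fls_agree_upto_def)
qed

section \<open>Back to the representation of the statement\<close>

definition to_lser :: "gls \<Rightarrow> lser" where
  "to_lser f = (\<lambda>n. Rep_grassmann (f $$ (- n)))"

definition to_sser :: "sfun \<Rightarrow> sser" where
  "to_sser F = (to_lser (fst F), to_lser (snd F))"

lemma to_lser_add: "to_lser (f + g) = to_lser f + to_lser g"
  by (simp add: to_lser_def fun_eq_iff Rep_grassmann_add)

lemma to_lser_diff: "to_lser f (n - k) = Rep_grassmann (f $$ (k - n))"
  by (simp add: to_lser_def)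

lemma to_lser_eq_0_iff: "to_lser f n = 0 \<longleftrightarrow> f $$ (- n) = 0"
  by (simp add: to_lser_def)

lemma lmul_to_lser: "lmul (to_lser f) (to_lser g) = to_lser (f * g)"
proof
  fix n
  let ?K = "{k. to_lser f k \<noteq> 0 \<and> to_lser g (n - k) \<noteq> 0}"
  have "?K \<subseteq> {n + fls_subdegree g .. - fls_subdegree f}"
  proof
    fix k assume "k \<in> ?K"
    then have "f $$ (- k) \<noteq> 0" "g $$ (k - n) \<noteq> 0"
      by (auto simp: to_lser_eq_0_iff)
    then have "fls_subdegree f \<le> - k" "fls_subdegree g \<le> k - n"
      using fls_subdegree_leI by auto
    then show "k \<in> {n + fls_subdegree g .. - fls_subdegree f}"
      by auto
  qed
  then have "finite ?K"
    by (rule finite_subset) simp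
  have "(f * g) $$ (- n) = (\<Sum>i\<in>uminus ` ?K. f $$ i * g $$ (- n - i))"
  proof (rule fls_times_nth_superset)
    fix i assume "f $$ i \<noteq> 0" "g $$ (- n - i) \<noteq> 0"
    moreover have "- i - n = - n - i"
      by simp
    then have "to_lser g (n - - i) = Rep_grassmann (g $$ (- n - i))"
      by (simp add: to_lser_def)
    moreover have "to_lser f (- i) = Rep_grassmann (f $$ i)"
      by (simp add: to_lser_def)
    ultimately show "i \<in> uminus ` ?K"
      by (intro image_eqI[of _ _ "- i"]) auto
  qed (use \<open>finite ?K\<close> in simp)
  also have "\<dots> = (\<Sum>k\<in>?K. f $$ (- k) * g $$ (k - n))"
    by (subst sum.reindex) (auto simp: inj_on_def)
  finally show "lmul (to_lser f) (to_lser g) n = to_lser (f * g) n"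
    by (simp add: lmul_def to_lser_def Rep_grassmann_sum Rep_grassmann_mult)
qed

lemma ghat_to_lser: "(\<lambda>k. ghat (to_lser f k)) = to_lser (fls_hat f)"
  by (simp add: to_lser_def fun_eq_iff hat.rep_eq)

lemma smul_to_sser: "smul (to_sser F) (to_sser G) = to_sser (stimes F G)"
  by (simp add: smul_def to_sser_def stimes_def lmul_to_lser ghat_to_lser to_lser_add fun_eq_iff)

lemma dz_to_lser: "dz (to_lser f) = to_lser (ddz f)"
proof
  fix n :: int
  have "- n - 1 = - (n + 1)" "1 - - n = n + 1"
    by auto
  then have "ddz f $$ (- n) = of_int (n + 1) * f $$ (- (n + 1))"
    by (simp only: ddz_nth)
  then show "dz (to_lser f) n = to_lser (ddz f) n"
    unfolding dz_def to_lser_def by (simp only: Rep_grassmann_of_int_mult)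
qed

lemma sD_to_sser: "sD (to_sser F) = to_sser (sfD F)"
  by (simp add: sD_def to_sser_def sfD_def dz_to_lser)

lemma to_sser_zvar: "to_sser zvar = zser"
  by (auto simp: to_sser_def zvar_def zser_def to_lser_def fun_eq_iff one_grassmann.rep_eq)

lemma to_sser_thvar: "to_sser thvar = thser"
  by (auto simp: to_sser_def thvar_def thser_def to_lser_def fun_eq_iff fls_one_nth one_grassmann.rep_eq)

text \<open>\<open>gmul\<close> ignores the values of its arguments on infinite index sets.\<close>

definition of_gr :: "gr \<Rightarrow> grassmann" where
  "of_gr a = Abs_grassmann (\<lambda>S. if finite S then a S else 0)"

lemma Rep_grassmann_of_gr: "Rep_grassmann (of_gr a) = (\<lambda>S. if finite S then a S else 0)"
  unfolding of_gr_def by (rule Abs_grassmann_inverse) simp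

lemma Rep_grassmann_of_gr_mult: "Rep_grassmann (of_gr a * x) = gmul a (Rep_grassmann x)"
proof -
  have "gmul (\<lambda>S. if finite S then a S else 0) b = gmul a b" for b
    unfolding gmul_def by (intro ext if_cong sum.cong refl) (auto intro: finite_subset)
  then show ?thesis
    by (simp add: Rep_grassmann_mult Rep_grassmann_of_gr)
qed

lemma is_even_of_gr: "geven a \<Longrightarrow> is_even (of_gr a)"
  by (simp add: is_even_def Rep_grassmann_of_gr geven_def)

lemma is_odd_of_gr: "godd a \<Longrightarrow> is_odd (of_gr a)"
  by (simp add: is_odd_def Rep_grassmann_of_gr godd_def)

text \<open>\<open>coeff_series A\<close> is p = sum_(j<0) A_j z^(j+1), and \<open>half_deriv_coeff_series A\<close> is
  q = sum_(j<0) (j+1)/2 A_j z^j.\<close>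

definition coeff_series :: "(int \<Rightarrow> gr) \<Rightarrow> gls" where
  "coeff_series A = Abs_fls (\<lambda>k. if 0 \<le> k then of_gr (A (- k - 1)) else 0)"

definition half_deriv_coeff_series :: "(int \<Rightarrow> gr) \<Rightarrow> gls" where
  "half_deriv_coeff_series A =
     Abs_fls (\<lambda>k. if 1 \<le> k then scalar ((of_int (- k) + 1) / 2) * of_gr (A (- k)) else 0)"

lemma coeff_series_nth: "coeff_series A $$ k = (if 0 \<le> k then of_gr (A (- k - 1)) else 0)"
  unfolding coeff_series_def by (rule nth_Abs_fls_lower_bound[of 0]) simp

lemma half_deriv_coeff_series_nth:
  "half_deriv_coeff_series A $$ k = (if 1 \<le> k then scalar ((of_int (- k) + 1) / 2) * of_gr (A (- k)) else 0)"
  unfolding half_deriv_coeff_series_def by (rule nth_Abs_fls_lower_bound[of 0]) simp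

lemma is_even_fls_coeff_series: "(\<And>j. j < 0 \<Longrightarrow> geven (A j)) \<Longrightarrow> is_even_fls (coeff_series A)"
  by (simp add: is_even_fls_def coeff_series_nth is_even_of_gr)

lemma is_odd_fls_coeff_series: "(\<And>j. j < 0 \<Longrightarrow> godd (A j)) \<Longrightarrow> is_odd_fls (coeff_series A)"
  by (simp add: is_odd_fls_def coeff_series_nth is_odd_of_gr)

lemma is_even_fls_half_deriv_coeff_series:
  "(\<And>j. j < 0 \<Longrightarrow> geven (A j)) \<Longrightarrow> is_even_fls (half_deriv_coeff_series A)"
  by (simp add: is_even_fls_def half_deriv_coeff_series_nth is_even_of_gr is_even_scalar_mult)

lemma fls_weight_le_coeff_series: "fls_weight_le 0 (coeff_series A)"
  by (simp add: fls_weight_le_def coeff_series_nth)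

lemma fls_weight_le_half_deriv_coeff_series: "fls_weight_le (-2) (half_deriv_coeff_series A)"
  by (simp add: fls_weight_le_def half_deriv_coeff_series_nth)

lemma ddz_coeff_series: "ddz (coeff_series A) = half_deriv_coeff_series A + half_deriv_coeff_series A"
proof (rule fls_eqI)
  fix k
  show "ddz (coeff_series A) $$ k = (half_deriv_coeff_series A + half_deriv_coeff_series A) $$ k"
  proof (cases "1 \<le> k")
    case True
    have "- (k - 1) - 1 = - k"
      by simp
    then have "ddz (coeff_series A) $$ k = scalar (of_int (1 - k)) * of_gr (A (- k))"
      using True by (simp add: ddz_nth coeff_series_nth of_int_eq_scalar)
    moreover have "of_int (1 - k) = (of_int (- k) + 1) / 2 + (of_int (- k) + 1) / (2 :: complex)"
      by simp
    ultimately show ?thesis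
      using True by (simp only: scalar_add distrib_right) (simp add: half_deriv_coeff_series_nth)
  next
    case False
    then show ?thesis
      by (simp add: ddz_nth coeff_series_nth half_deriv_coeff_series_nth)
  qed
qed

lemma fls_times_nth_negsum:
  fixes f x :: gls
  assumes f: "\<And>i. f $$ i = (if - i - s < 0 then c (- i - s) else 0)"
    and lo: "lo \<le> n - s + fls_subdegree x"
  shows "(f * x) $$ (- n) = (\<Sum>j\<in>{lo..-1}. c j * x $$ (j + s - n))"
proof -
  have "(f * x) $$ (- n) = (\<Sum>i\<in>(\<lambda>j. - j - s) ` {lo..-1}. f $$ i * x $$ (- n - i))"
  proof (rule fls_times_nth_superset)
    fix i assume i: "f $$ i \<noteq> 0" "x $$ (- n - i) \<noteq> 0"
    then have "- i - s < 0"
      using f by (auto split: if_splits)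
    moreover have "fls_subdegree x \<le> - n - i"
      using i fls_subdegree_leI by blast
    ultimately show "i \<in> (\<lambda>j. - j - s) ` {lo..-1}"
      using lo by (intro image_eqI[of _ _ "- i - s"]) auto
  qed simp
  also have "\<dots> = (\<Sum>j\<in>{lo..-1}. f $$ (- j - s) * x $$ (j + s - n))"
    by (subst sum.reindex) (auto simp: inj_on_def algebra_simps)
  also have "\<dots> = (\<Sum>j\<in>{lo..-1}. c j * x $$ (j + s - n))"
    using f by (intro sum.cong) auto
  finally show ?thesis .
qed

lemma negsum_eq_interval:
  assumes "\<And>j. j < lo \<Longrightarrow> j < 0 \<Longrightarrow> F j = 0"
  shows "negsum F = (\<Sum>j\<in>{lo..-1}. F j)"
  unfolding negsum_def using assms by (intro sum.mono_neutral_left) (auto simp: not_less)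

lemma Yterm_fst:
  "fst (Yterm A M j f) n = gmul (A j) (dz (fst f) (n - (j + 1))) + gmul (M j) (snd f (n - (j + 1)))"
proof -
  have "fst (cmul (A j) (Lop j f)) n = - gmul (A j) (dz (fst f) (n - (j + 1)))"
       "fst (cmul (M j) (Gop j f)) n = - gmul (M j) (snd f (n - (j + 1)))"
    unfolding cmul_def Lop_def Gop_def sh_def fst_conv by (rule gmul_uminus_right)+
  then show ?thesis
    unfolding Yterm_def fst_conv by simp
qed

lemma Yterm_snd:
  assumes "geven (A j)" "godd (M j)"
  shows "snd (Yterm A M j f) n =
    gmul (A j) (dz (snd f) (n - (j + 1))) + gscale ((of_int j + 1) / 2) (gmul (A j) (snd f (n - j)))
    + gmul (M j) (dz (fst f) (n - (j + 1)))"
proof -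
  have L: "snd (cmul (A j) (Lop j f)) n = - gmul (A j) (dz (snd f) (n - (j + 1)))
      - gscale ((of_int j + 1) / 2) (gmul (A j) (snd f (n - j)))"
    unfolding cmul_def Lop_def sh_def snd_conv ghat_even[OF assms(1)]
    by (simp only: diff_conv_add_uminus gmul_add_right gmul_uminus_right gmul_gscale_right)
  have G: "snd (cmul (M j) (Gop j f)) n = - gmul (M j) (dz (fst f) (n - (j + 1)))"
    unfolding cmul_def Gop_def sh_def snd_conv ghat_odd[OF assms(2)] by (rule gmul_uminus_left)
  show ?thesis
    unfolding Yterm_def snd_conv L G by (simp add: algebra_simps)
qed

lemma Yop_fst_to_sser:
  "negsum (\<lambda>j. fst (Yterm A M j (to_sser (F0, F1))) n) =
     to_lser (coeff_series A * ddz F0 + coeff_series M * F1) n"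
proof -
  define lo where "lo = n - 1 + min (fls_subdegree (ddz F0)) (fls_subdegree F1)"
  have coeff: "coeff_series B $$ i = (if - i - 1 < 0 then of_gr (B (- i - 1)) else 0)" for B i
    by (simp add: coeff_series_nth)
  have summand: "fst (Yterm A M j (to_sser (F0, F1))) n =
      gmul (A j) (Rep_grassmann (ddz F0 $$ (j + 1 - n))) + gmul (M j) (Rep_grassmann (F1 $$ (j + 1 - n)))" for j
    by (simp add: Yterm_fst to_sser_def dz_to_lser to_lser_diff)
  have "negsum (\<lambda>j. fst (Yterm A M j (to_sser (F0, F1))) n) =
      (\<Sum>j\<in>{lo..-1}. gmul (A j) (Rep_grassmann (ddz F0 $$ (j + 1 - n))) +
                      gmul (M j) (Rep_grassmann (F1 $$ (j + 1 - n))))"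
    unfolding summand by (rule negsum_eq_interval) (simp add: lo_def)
  also have "\<dots> = Rep_grassmann ((coeff_series A * ddz F0) $$ (- n)) +
                  Rep_grassmann ((coeff_series M * F1) $$ (- n))"
  proof -
    have "(coeff_series A * ddz F0) $$ (- n) = (\<Sum>j\<in>{lo..-1}. of_gr (A j) * ddz F0 $$ (j + 1 - n))"
         "(coeff_series M * F1) $$ (- n) = (\<Sum>j\<in>{lo..-1}. of_gr (M j) * F1 $$ (j + 1 - n))"
      by (rule fls_times_nth_negsum[OF coeff]; simp add: lo_def)+
    then show ?thesis
      by (simp add: Rep_grassmann_sum Rep_grassmann_of_gr_mult sum.distrib)
  qed
  finally show ?thesis
    by (simp add: to_lser_def Rep_grassmann_add)
qed

lemma Yop_snd_to_sser:
  assumes "\<And>j. j < 0 \<Longrightarrow> geven (A j)" and "\<And>j. j < 0 \<Longrightarrow> godd (M j)"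
  shows "negsum (\<lambda>j. snd (Yterm A M j (to_sser (F0, F1))) n) =
     to_lser (coeff_series A * ddz F1 + coeff_series M * ddz F0 + half_deriv_coeff_series A * F1) n"
proof -
  define lo where "lo = n - 1 + min (min (fls_subdegree (ddz F1)) (fls_subdegree F1)) (fls_subdegree (ddz F0))"
  have coeff: "coeff_series B $$ i = (if - i - 1 < 0 then of_gr (B (- i - 1)) else 0)" for B i
    by (simp add: coeff_series_nth)
  have half: "half_deriv_coeff_series A $$ i =
      (if - i - 0 < 0 then scalar ((of_int (- i - 0) + 1) / 2) * of_gr (A (- i - 0)) else 0)" for i
    by (simp add: half_deriv_coeff_series_nth)
  have summand: "snd (Yterm A M j (to_sser (F0, F1))) n =
      gmul (A j) (Rep_grassmann (ddz F1 $$ (j + 1 - n))) +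
      gscale ((of_int j + 1) / 2) (gmul (A j) (Rep_grassmann (F1 $$ (j - n)))) +
      gmul (M j) (Rep_grassmann (ddz F0 $$ (j + 1 - n)))" if "j < 0" for j
    using Yterm_snd[where A = A and M = M, OF assms[OF that]]
    by (simp add: to_sser_def dz_to_lser to_lser_diff)
  have "negsum (\<lambda>j. snd (Yterm A M j (to_sser (F0, F1))) n) =
      (\<Sum>j\<in>{lo..-1}. snd (Yterm A M j (to_sser (F0, F1))) n)"
    by (rule negsum_eq_interval) (simp add: summand lo_def gscale_def fun_eq_iff)
  also have "\<dots> = Rep_grassmann ((coeff_series A * ddz F1) $$ (- n)) +
                  Rep_grassmann ((coeff_series M * ddz F0) $$ (- n)) +
                  Rep_grassmann ((half_deriv_coeff_series A * F1) $$ (- n))"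
  proof -
    have "(coeff_series A * ddz F1) $$ (- n) = (\<Sum>j\<in>{lo..-1}. of_gr (A j) * ddz F1 $$ (j + 1 - n))"
         "(coeff_series M * ddz F0) $$ (- n) = (\<Sum>j\<in>{lo..-1}. of_gr (M j) * ddz F0 $$ (j + 1 - n))"
      by (rule fls_times_nth_negsum[OF coeff]; simp add: lo_def)+
    moreover have "(half_deriv_coeff_series A * F1) $$ (- n) =
        (\<Sum>j\<in>{lo..-1}. scalar ((of_int j + 1) / 2) * of_gr (A j) * F1 $$ (j + 0 - n))"
      by (rule fls_times_nth_negsum[OF half]) (simp add: lo_def)
    ultimately show ?thesis
      by (simp add: summand Rep_grassmann_sum Rep_grassmann_of_gr_mult Rep_grassmann_scalar_mult
          sum.distrib mult.assoc)
  qed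
  finally show ?thesis
    by (simp add: to_lser_def Rep_grassmann_add)
qed

lemma Yop_to_sser:
  assumes "\<And>j. j < 0 \<Longrightarrow> geven (A j)" and "\<And>j. j < 0 \<Longrightarrow> godd (M j)"
  shows "Yop A M (to_sser F) =
           to_sser (vfield (coeff_series A) (coeff_series M) (half_deriv_coeff_series A) F)"
proof -
  obtain F0 F1 where "F = (F0, F1)"
    by fastforce
  then show ?thesis
    unfolding Yop_def using Yop_fst_to_sser Yop_snd_to_sser[OF assms]
    by (simp add: vfield_def to_sser_def fun_eq_iff)
qed

lemma Eop_to_sser:
  assumes Y: "\<And>G. Yop A M (to_sser G) = to_sser (Y G)"
    and weights: "\<And>k. weight_le (d - int k) ((Y ^^ k) F)"
  shows "Eop A M (to_sser F) = to_sser (sexp Y F)"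
proof -
  have power: "(Yop A M ^^ k) (to_sser F) = to_sser ((Y ^^ k) F)" for k
    by (induction k) (simp_all add: Y)
  have "(\<Sum>k | to_lser (sel ((Y ^^ k) F)) n \<noteq> 0. gscale (inverse (fact k)) (to_lser (sel ((Y ^^ k) F)) n)) =
        to_lser (sel (sexp Y F)) n" if "sel = fst \<or> sel = snd" for sel n
    by (simp add: sexp_nth[OF weights that] exp_coeff_def to_lser_def Rep_grassmann_sum
        Rep_grassmann_scalar_mult)
  then show ?thesis
    unfolding Eop_def power by (simp add: to_sser_def fun_eq_iff)
qed

theorem theorem3p1:
  fixes A M :: "int \<Rightarrow> gr"
  assumes "\<And>j. j < 0 \<Longrightarrow> grass (A j) \<and> geven (A j)"
      and "\<And>j. j < 0 \<Longrightarrow> grass (M j) \<and> godd (M j)"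
  shows "sD (Eop A M zser) = smul (Eop A M thser) (sD (Eop A M thser))"
proof -
  have A: "\<And>j. j < 0 \<Longrightarrow> geven (A j)" and M: "\<And>j. j < 0 \<Longrightarrow> godd (M j)"
    using assms by blast+
  let ?p = "coeff_series A" and ?m = "coeff_series M" and ?q = "half_deriv_coeff_series A"
  note weights = fls_weight_le_coeff_series[of A] fls_weight_le_coeff_series[of M]
    fls_weight_le_half_deriv_coeff_series[of A]
  have Y: "Yop A M (to_sser G) = to_sser (vfield ?p ?m ?q G)" for G
    by (rule Yop_to_sser[OF A M])
  have "Eop A M zser = to_sser (sexp (vfield ?p ?m ?q) zvar)"
    using Eop_to_sser[OF Y weight_le_vfield_power[OF weights weight_le_zvar]] by (simp add: to_sser_zvar)
  moreover have "Eop A M thser = to_sser (sexp (vfield ?p ?m ?q) thvar)"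
    using Eop_to_sser[OF Y weight_le_vfield_power[OF weights weight_le_thvar]] by (simp add: to_sser_thvar)
  moreover note sfD_sexp_vfield[OF is_even_fls_coeff_series[OF A] is_odd_fls_coeff_series[OF M]
      is_even_fls_half_deriv_coeff_series[OF A] ddz_coeff_series weights]
  ultimately show ?thesis
    by (simp add: sD_to_sser smul_to_sser)
qed

end
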